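(* Let $\Gamma$ be an oriented Jordan smooth curve and $\alpha:\Gamma\to\Gamma$ a homeomorphism with nonempty set $\Lambda$ of periodic points. (a) If $Y$ is finite, there is a finite decomposition $\Gamma=\big(\bigcup_i\overline{\omega_i}\big)\cup\big(\bigcup_j\overline{\gamma_j}\big)$, where $\omega_i\subset\Gamma\setminus\Phi$ and $\gamma_j\subset\Phi\setminus\Lambda$ are pairwise disjoint $\alpha_m$-invariant open arcs with endpoints in $Y$. (b) Let $f:\Gamma\to\mathbb R$ be continuous. If $Y$ is infinite and $f(\tau)>0$ for all $\tau\in Y'$, then there is a finite decomposition $\Gamma=\big(\bigcup_i\overline{\omega_i}\big)\cup\big(\bigcup_j\overline{\gamma_j}\big)\cup\big(\bigcup_k\overline{v_k}\big)$, where $\omega_i\subset\Gamma\setminus\Phi$, $\gamma_j\subset\Phi\setminus\Lambda$, $v_k\subset\Gamma$ are pairwise disjoint $\alpha_m$-invariant open arcs with endpoints in $Y$, $\overline{v_k}\cap Y'\ne\emptyset$, and $f(t)>0$ for all $t\in\overline{v_k}$ and all $k$.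
   Context: $\alpha_0=\mathrm{id}$, $\alpha_n=\alpha\circ\alpha_{n-1}$. A point $\tau$ is periodic of multiplicity $m$ if $\alpha_m(\tau)=\tau$ and $\alpha_j(\tau)\ne\tau$ for $1\le j<m$. If $\alpha$ preserves the orientation, all periodic points have a common multiplicity $m$; if $\alpha$ changes the orientation, set $m=2$. Then $\Lambda$ is the set of fixed points of $\alpha_m$. $\Phi=\overline{\{t\in\Gamma:\alpha_m(t)\ne t\}}$, $Y=\Lambda\cap\Phi$ (the boundary of $\Lambda$), $Y'$ the set of limit points of $Y$. *)

theory Defs
  imports "HOL-Analysis.Analysis"
begin

text \<open>An oriented smooth Jordan curve in the complex plane, given by a 1-periodic
  C1 parametrisation g with nowhere vanishing derivative, injective on [0,1).
  The orientation of the curve is the direction of increasing parameter.\<close>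
definition smooth_jordan_param :: "(real \<Rightarrow> complex) \<Rightarrow> bool" where
  "smooth_jordan_param g \<longleftrightarrow>
     (\<forall>t. g (t + 1) = g t) \<and>
     g C1_differentiable_on UNIV \<and>
     (\<forall>t. vector_derivative g (at t) \<noteq> 0) \<and>
     inj_on g {0..<1}"

definition curve :: "(real \<Rightarrow> complex) \<Rightarrow> complex set" where
  "curve g = g ` {0..<1}"

definition param :: "(real \<Rightarrow> complex) \<Rightarrow> complex \<Rightarrow> real" where
  "param g z = (THE s. s \<in> {0..<1} \<and> g s = z)"

definition pdist :: "(real \<Rightarrow> complex) \<Rightarrow> complex \<Rightarrow> complex \<Rightarrow> real" where
  "pdist g a t = frac (param g t - param g a)"

definition cyc :: "(real \<Rightarrow> complex) \<Rightarrow> complex \<Rightarrow> complex \<Rightarrow> complex \<Rightarrow> bool" where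
  "cyc g a b c \<longleftrightarrow> pdist g a b < pdist g a c"

definition preserves_orientation :: "(real \<Rightarrow> complex) \<Rightarrow> (complex \<Rightarrow> complex) \<Rightarrow> bool" where
  "preserves_orientation g \<alpha> \<longleftrightarrow>
     (\<forall>a\<in>curve g. \<forall>b\<in>curve g. \<forall>c\<in>curve g. a \<noteq> b \<and> b \<noteq> c \<and> a \<noteq> c \<longrightarrow>
        cyc g a b c \<longrightarrow> cyc g (\<alpha> a) (\<alpha> b) (\<alpha> c))"

text \<open>Open arc of the curve from a to b in the positive direction (both endpoints
  excluded); for a = b it is the curve with the point a removed.\<close>
definition open_arc :: "(real \<Rightarrow> complex) \<Rightarrow> complex \<Rightarrow> complex \<Rightarrow> complex set" where
  "open_arc g a b = {t \<in> curve g. 0 < pdist g a t \<and> (pdist g a t < pdist g a b \<or> a = b)}"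

definition is_periodic_point :: "complex set \<Rightarrow> (complex \<Rightarrow> complex) \<Rightarrow> complex \<Rightarrow> bool" where
  "is_periodic_point \<Gamma> \<alpha> \<tau> \<longleftrightarrow> \<tau> \<in> \<Gamma> \<and> (\<exists>n>0. (\<alpha> ^^ n) \<tau> = \<tau>)"

text \<open>The number m: the common multiplicity of periodic points (i.e. the least
  multiplicity) if \<alpha> preserves orientation, and 2 otherwise.\<close>
definition mult_m :: "(real \<Rightarrow> complex) \<Rightarrow> (complex \<Rightarrow> complex) \<Rightarrow> nat" where
  "mult_m g \<alpha> = (if preserves_orientation g \<alpha>
      then (LEAST n. n > 0 \<and> (\<exists>\<tau>\<in>curve g. (\<alpha> ^^ n) \<tau> = \<tau>)) else 2)"

definition Lam :: "(real \<Rightarrow> complex) \<Rightarrow> (complex \<Rightarrow> complex) \<Rightarrow> complex set" where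
  "Lam g \<alpha> = {t \<in> curve g. (\<alpha> ^^ mult_m g \<alpha>) t = t}"

definition Phi :: "(real \<Rightarrow> complex) \<Rightarrow> (complex \<Rightarrow> complex) \<Rightarrow> complex set" where
  "Phi g \<alpha> = closure {t \<in> curve g. (\<alpha> ^^ mult_m g \<alpha>) t \<noteq> t}"

definition Ybd :: "(real \<Rightarrow> complex) \<Rightarrow> (complex \<Rightarrow> complex) \<Rightarrow> complex set" where
  "Ybd g \<alpha> = Lam g \<alpha> \<inter> Phi g \<alpha>"

definition Ylim :: "(real \<Rightarrow> complex) \<Rightarrow> (complex \<Rightarrow> complex) \<Rightarrow> complex set" where
  "Ylim g \<alpha> = {x. x islimpt Ybd g \<alpha>}"

definition adm_arc :: "(real \<Rightarrow> complex) \<Rightarrow> (complex \<Rightarrow> complex) \<Rightarrow> complex set \<Rightarrow> bool" where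
  "adm_arc g \<alpha> A \<longleftrightarrow> (\<exists>a\<in>Ybd g \<alpha>. \<exists>b\<in>Ybd g \<alpha>. A = open_arc g a b) \<and>
      (\<alpha> ^^ mult_m g \<alpha>) ` A = A"

end

(* Cut the curve at a point y of Y and parametrise it over [q, q + 1], with g q = y, so that Y
   pulls back to a closed set S containing both ends.  The supremum of the points reachable from q
   gives a finite chain q = p_0 < ... < p_N = q + 1 in S each of whose steps either misses S, or
   contains a limit point of S and has f > 0 on it; positivity of f on Y' spreads to a neighbourhood
   by continuity, which is what lets every chain be prolonged.  The corresponding arcs of the curve
   have their endpoints in Y, a subset of \<Lambda>, hence are \<alpha>\<^sub>m-invariant.  An arc missing Y is
   connected and misses \<Lambda> \<inter> \<Phi>, so it lies in \<Gamma> - \<Phi> or in \<Phi> - \<Lambda>, because the closed sets \<Lambda>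
   and \<Phi> cover \<Gamma>.  If Y is finite then Y' is empty and arcs of the third kind do not occur.
   Finally \<Lambda> is nonempty also when \<alpha> does not preserve the orientation: then a lift of \<alpha> to the
   line has degree different from 1, which forces a fixed point. *)

theory Submission
  imports Defs
begin

lemma closure_image_greaterThanLessThan:
  fixes f :: "real \<Rightarrow> 'a::metric_space"
  assumes "continuous_on {x..y} f" "x < y"
  shows "closure (f ` {x<..<y}) = f ` {x..y}"
proof
  show "closure (f ` {x<..<y}) \<subseteq> f ` {x..y}"
    by (intro closure_minimal image_mono compact_imp_closed compact_continuous_image assms) auto
  have "f ` closure {x<..<y} \<subseteq> closure (f ` {x<..<y})"
    using assms by (intro image_closure_subset closure_subset) auto
  moreover have "closure {x<..<y} = {x..y}"
    using assms(2) by simp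
  ultimately show "f ` {x..y} \<subseteq> closure (f ` {x<..<y})"
    by metis
qed

lemma exp_2pi_eq_iff:
  "exp (2 * of_real pi * \<i> * of_real x) = exp (2 * of_real pi * \<i> * of_real y) \<longleftrightarrow> x - y \<in> \<int>"
proof
  assume "exp (2 * of_real pi * \<i> * of_real x) = exp (2 * of_real pi * \<i> * of_real y)"
  then obtain n :: int where
    "2 * of_real pi * \<i> * of_real x = 2 * of_real pi * \<i> * of_real y + (of_int (2 * n) * pi) * \<i>"
    unfolding exp_eq by blast
  then have "Im (2 * of_real pi * \<i> * of_real x) = Im (2 * of_real pi * \<i> * of_real y + (of_int (2 * n) * pi) * \<i>)"
    by simp
  then have "2 * pi * x = 2 * pi * y + 2 * of_int n * pi"
    by simp
  then have "pi * (2 * x) = pi * (2 * (y + of_int n))"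
    by (simp add: algebra_simps)
  then have "x = y + of_int n"
    by simp
  then show "x - y \<in> \<int>"
    by simp
next
  assume "x - y \<in> \<int>"
  then obtain n where "x = y + of_int n"
    by (metis Ints_cases add.commute diff_add_cancel)
  then have "2 * of_real pi * \<i> * of_real x = 2 * of_real pi * \<i> * of_real y + (of_int (2 * n) * pi) * \<i>"
    by (simp add: algebra_simps)
  then show "exp (2 * of_real pi * \<i> * of_real x) = exp (2 * of_real pi * \<i> * of_real y)"
    unfolding exp_eq by blast
qed

lemma IVT_Ints:
  fixes G :: "real \<Rightarrow> real"
  assumes "continuous_on {a..b} G" "a \<le> b" "1 \<le> \<bar>G b - G a\<bar>"
  obtains s where "s \<in> {a..b}" "G s \<in> \<int>"
proof (cases "G a \<le> G b")
  case True
  then have "G a \<le> of_int \<lceil>G a\<rceil>" "of_int \<lceil>G a\<rceil> \<le> G b"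
    using assms(3) by linarith+
  then show ?thesis
    using IVT'[of G a _ b] assms(1,2) that by (metis atLeastAtMost_iff Ints_of_int)
next
  case False
  then have "G b \<le> of_int \<lfloor>G a\<rfloor>" "of_int \<lfloor>G a\<rfloor> \<le> G a"
    using assms(3) by linarith+
  then show ?thesis
    using IVT2'[of G b _ a] assms(1,2) that by (metis atLeastAtMost_iff Ints_of_int)
qed

lemma continuous_inj_on_less:
  fixes f :: "real \<Rightarrow> real"
  assumes "continuous_on {a..b} f" "inj_on f {a..b}" "f a < f b" "a \<le> u" "u < v" "v \<le> b"
  shows "f u < f v"
proof -
  have "f a < f v"
    using continuous_inj_imp_mono[OF _ _ assms(1,2), of v] assms by (cases "v = b") auto
  moreover have "continuous_on {a..v} f" "inj_on f {a..v}"
    using assms by (auto intro: continuous_on_subset inj_on_subset)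
  ultimately show ?thesis
    using continuous_inj_imp_mono[of a u v f] assms by (cases "u = a") auto
qed

section \<open>Chains through a closed set of reals\<close>

(* Steps missing S become the arcs \<omega> and \<gamma> of the theorem, the other steps the arcs v. *)
definition chain_step :: "real set \<Rightarrow> (real \<Rightarrow> real) \<Rightarrow> real \<Rightarrow> real \<Rightarrow> bool" where
  "chain_step S F x y \<longleftrightarrow> x < y \<and>
     (S \<inter> {x<..<y} = {} \<or> (\<forall>s\<in>{x..y}. 0 < F s) \<and> (\<exists>s\<in>{x..y}. s islimpt S))"

definition step_chain :: "real set \<Rightarrow> (real \<Rightarrow> real) \<Rightarrow> nat \<Rightarrow> (nat \<Rightarrow> real) \<Rightarrow> bool" where
  "step_chain S F N p \<longleftrightarrow> (\<forall>i\<le>N. p i \<in> S) \<and> (\<forall>i<N. chain_step S F (p i) (p (Suc i)))"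

lemma step_chain_snoc:
  assumes "step_chain S F N p" "y \<in> S" "chain_step S F (p N) y"
  shows "step_chain S F (Suc N) (p(Suc N := y))"
  using assms unfolding step_chain_def by (auto simp: le_Suc_eq less_Suc_eq)

lemma step_chain_less:
  assumes "step_chain S F N p" "i < j" "j \<le> N"
  shows "p i < p j"
  using assms(2,3)
proof (induction j)
  case (Suc j)
  have "p j < p (Suc j)"
    using assms(1) Suc.prems unfolding step_chain_def chain_step_def by auto
  then show ?case
    using Suc by (cases "i = j") auto
qed simp

lemma obtain_step_containing:
  fixes p :: "nat \<Rightarrow> real"
  assumes "p 0 \<le> s" "s \<le> p N" "0 < N"
  obtains i where "i < N" "p i \<le> s" "s \<le> p (Suc i)"
proof -
  define I where "I = {i. i < N \<and> p i \<le> s}"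
  have "finite I" "0 \<in> I"
    using assms unfolding I_def by auto
  then have i: "Max I \<in> I" "\<And>j. j \<in> I \<Longrightarrow> j \<le> Max I"
    using Max_in Max_ge by blast+
  have "s \<le> p (Suc (Max I))"
  proof (cases "Suc (Max I) = N")
    case False
    then have "Suc (Max I) \<notin> I"
      using i(2) by fastforce
    then show ?thesis
      using i(1) False unfolding I_def by auto
  qed (use assms in simp)
  then show ?thesis
    using i(1) that unfolding I_def by blast
qed

lemma chain_step_near_limit_point:
  assumes "continuous_on {a..b} F" "z \<in> {a..b}" "z islimpt S" "0 < F z"
  obtains d where "0 < d"
    "\<And>x y. a \<le> x \<Longrightarrow> x < y \<Longrightarrow> y \<le> b \<Longrightarrow> z \<in> {x..y} \<Longrightarrow> y - x < d \<Longrightarrow> chain_step S F x y"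
proof -
  obtain d where "0 < d" and d: "\<And>t. t \<in> {a..b} \<Longrightarrow> dist t z < d \<Longrightarrow> dist (F t) (F z) < F z"
    using assms(1,2,4) unfolding continuous_on_iff by metis
  show ?thesis
  proof (rule that[OF \<open>0 < d\<close>])
    fix x y assume "a \<le> x" "x < y" "y \<le> b" "z \<in> {x..y}" "y - x < d"
    have "0 < F s" if "s \<in> {x..y}" for s
    proof -
      have "dist (F s) (F z) < F z"
        using d \<open>a \<le> x\<close> \<open>y \<le> b\<close> \<open>z \<in> {x..y}\<close> \<open>y - x < d\<close> that
        by (auto simp: dist_real_def)
      then show ?thesis
        by (simp add: dist_real_def)
    qed
    then show "chain_step S F x y"
      unfolding chain_step_def using \<open>x < y\<close> \<open>z \<in> {x..y}\<close> assms(3) by blast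
  qed
qed

lemma chain_step_rightwards:
  assumes "closed S" "S \<subseteq> {a..b}" "b \<in> S" "z \<in> S" "z < b" "continuous_on {a..b} F"
    and pos: "\<And>s. s \<in> {a..b} \<Longrightarrow> s islimpt S \<Longrightarrow> 0 < F s"
  obtains y where "y \<in> S" "chain_step S F z y"
proof (cases "\<exists>e>0. S \<inter> {z<..<z+e} = {}")
  case True
  then obtain e where "0 < e" and e: "S \<inter> {z<..<z+e} = {}"
    by blast
  define T where "T = S \<inter> {z+e..}"
  have "b \<in> T"
    using e assms(3,5) unfolding T_def by force
  moreover have "bdd_below T" "closed T"
    unfolding T_def using assms(1) by (auto intro: bdd_belowI[of _ "z + e"])
  ultimately have "Inf T \<in> T"
    by (intro closed_contains_Inf) auto
  moreover have "S \<inter> {z<..<Inf T} = {}"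
    using e cInf_lower[OF _ \<open>bdd_below T\<close>] unfolding T_def by force
  ultimately show ?thesis
    using that \<open>0 < e\<close> unfolding chain_step_def T_def by force
next
  case False
  then have right: "\<exists>t\<in>S. z < t \<and> t < z + e" if "0 < e" for e
    using that by fastforce
  have "z islimpt S"
    unfolding islimpt_approachable
  proof (intro allI impI)
    fix e :: real assume "0 < e"
    then obtain t where "t \<in> S" "z < t" "t < z + e"
      using right by blast
    then show "\<exists>t\<in>S. t \<noteq> z \<and> dist t z < e"
      by (intro bexI[of _ t]) (auto simp: dist_real_def)
  qed
  moreover have "z \<in> {a..b}"
    using assms(2,4) by auto
  ultimately obtain d where "0 < d" and d:
    "\<And>x y. a \<le> x \<Longrightarrow> x < y \<Longrightarrow> y \<le> b \<Longrightarrow> z \<in> {x..y} \<Longrightarrow> y - x < d \<Longrightarrow> chain_step S F x y"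
    using chain_step_near_limit_point[OF assms(6)] pos by metis
  obtain t where "t \<in> S" "z < t" "t < z + d"
    using right \<open>0 < d\<close> by blast
  then show ?thesis
    using that d[of z t] \<open>z \<in> {a..b}\<close> assms(2) by force
qed

(* The supremum of the endpoints of chains starting at a is itself such an endpoint (approach it from
   the left inside a neighbourhood where F > 0), and it is b, since otherwise chain_step_rightwards
   would prolong the chain. *)
lemma step_chain_exists:
  assumes "closed S" "S \<subseteq> {a..b}" "a \<in> S" "b \<in> S" "continuous_on {a..b} F"
    and pos: "\<And>s. s \<in> {a..b} \<Longrightarrow> s islimpt S \<Longrightarrow> 0 < F s"
  obtains N p where "step_chain S F N p" "p 0 = a" "p N = b"
proof -
  define R where "R = {x. \<exists>N p. step_chain S F N p \<and> p 0 = a \<and> p N = x}"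
  have "R \<subseteq> S"
    unfolding R_def step_chain_def by auto
  have "a \<in> R"
    unfolding R_def step_chain_def using assms(3) by (auto intro!: exI[of _ 0])
  have R_step: "y \<in> R" if "x \<in> R" "y \<in> S" "chain_step S F x y" for x y
  proof -
    obtain N p where "step_chain S F N p" "p 0 = a" "p N = x"
      using \<open>x \<in> R\<close> unfolding R_def by blast
    then show ?thesis
      unfolding R_def using step_chain_snoc that by (intro CollectI exI[of _ "Suc N"]) fastforce
  qed
  have bdd: "bdd_above R"
    using \<open>R \<subseteq> S\<close> assms(2) bdd_above_Icc bdd_above_mono subset_trans by meson
  define z where "z = Sup R"
  have "z \<in> R"
  proof (rule ccontr)
    assume "z \<notin> R"
    have below: "\<exists>x\<in>R. z - e < x \<and> x < z" if "0 < e" for e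
    proof -
      obtain x where "x \<in> R" "z - e < x"
        using less_cSup_iff[OF _ bdd, of "z - e"] \<open>a \<in> R\<close> \<open>0 < e\<close> unfolding z_def by auto
      moreover have "x \<le> z" "x \<noteq> z"
        using cSup_upper[OF \<open>x \<in> R\<close> bdd] \<open>x \<in> R\<close> \<open>z \<notin> R\<close> unfolding z_def by auto
      ultimately show ?thesis
        by force
    qed
    have "z islimpt S"
      unfolding islimpt_approachable
    proof (intro allI impI)
      fix e :: real assume "0 < e"
      then obtain x where "x \<in> R" "z - e < x" "x < z"
        using below by blast
      then show "\<exists>x\<in>S. x \<noteq> z \<and> dist x z < e"
        using \<open>R \<subseteq> S\<close> by (intro bexI[of _ x]) (auto simp: dist_real_def)
    qed
    then have "z \<in> S"
      using assms(1) closed_limpt by blast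
    then have "z \<in> {a..b}"
      using assms(2) by auto
    then obtain d where "0 < d" and d:
      "\<And>x y. a \<le> x \<Longrightarrow> x < y \<Longrightarrow> y \<le> b \<Longrightarrow> z \<in> {x..y} \<Longrightarrow> y - x < d \<Longrightarrow> chain_step S F x y"
      using chain_step_near_limit_point[OF assms(5)] pos \<open>z islimpt S\<close> by metis
    obtain x where "x \<in> R" "z - d < x" "x < z"
      using below \<open>0 < d\<close> by blast
    then have "chain_step S F x z"
      using d \<open>R \<subseteq> S\<close> \<open>z \<in> {a..b}\<close> assms(2) by force
    then show False
      using R_step \<open>x \<in> R\<close> \<open>z \<in> S\<close> \<open>z \<notin> R\<close> by blast
  qed
  have "z = b"
  proof (rule ccontr)
    assume "z \<noteq> b"
    then have "z < b"
      using \<open>z \<in> R\<close> \<open>R \<subseteq> S\<close> assms(2) by force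
    moreover have "z \<in> S"
      using \<open>z \<in> R\<close> \<open>R \<subseteq> S\<close> by blast
    ultimately obtain y where "y \<in> S" "chain_step S F z y"
      using chain_step_rightwards[OF assms(1,2,4) _ _ assms(5) pos] by blast
    then have "y \<in> R" "z < y"
      using R_step[OF \<open>z \<in> R\<close>] unfolding chain_step_def by auto
    then show False
      using cSup_upper[OF _ bdd] unfolding z_def by fastforce
  qed
  then show ?thesis
    using \<open>z \<in> R\<close> that unfolding R_def by blast
qed


lemma step_chain_partition:
  assumes "step_chain S F N p" "p 0 = a" "p N = b" "S \<subseteq> {a..b}" "a < b"
  shows step_chain_Icc_eq_UN: "{a..b} = (\<Union>i<N. {p i..p (Suc i)})"
    and step_chain_disjoint:
      "i < N \<Longrightarrow> j < N \<Longrightarrow> i \<noteq> j \<Longrightarrow> {p i<..<p (Suc i)} \<inter> {p j<..<p (Suc j)} = {}"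
proof -
  have p_range: "p i \<in> {a..b}" if "i \<le> N" for i
    using assms(1,4) that unfolding step_chain_def by blast
  have p_le: "p i \<le> p j" if "i \<le> j" "j \<le> N" for i j
    using step_chain_less[OF assms(1)] that by (cases "i = j") (auto simp: less_imp_le)
  have "0 < N"
    using assms(2,3,5) by (cases N) auto
  show "{a..b} = (\<Union>i<N. {p i..p (Suc i)})"
  proof
    show "{a..b} \<subseteq> (\<Union>i<N. {p i..p (Suc i)})"
    proof
      fix s assume "s \<in> {a..b}"
      then obtain i where "i < N" "p i \<le> s" "s \<le> p (Suc i)"
        using obtain_step_containing[of p s N] assms(2,3) \<open>0 < N\<close> by auto
      then show "s \<in> (\<Union>i<N. {p i..p (Suc i)})"
        by auto
    qed
    show "(\<Union>i<N. {p i..p (Suc i)}) \<subseteq> {a..b}"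
    proof (rule UN_least)
      fix i assume "i \<in> {..<N}"
      then show "{p i..p (Suc i)} \<subseteq> {a..b}"
        using p_range[of i] p_range[of "Suc i"] by auto
    qed
  qed
  show "{p i<..<p (Suc i)} \<inter> {p j<..<p (Suc j)} = {}" if "i < N" "j < N" "i \<noteq> j"
    using p_le[of "Suc i" j] p_le[of "Suc j" i] that by (cases "i < j") auto
qed

section \<open>The parametrised curve\<close>

definition circle_coord :: "(real \<Rightarrow> complex) \<Rightarrow> complex \<Rightarrow> complex" where
  "circle_coord g z = exp (2 * of_real pi * \<i> * of_real (param g z))"

locale jordan_curve =
  fixes g :: "real \<Rightarrow> complex"
  assumes smooth_jordan_param: "smooth_jordan_param g"
begin

sublocale periodic: periodic_fun_simple' g
  using smooth_jordan_param by unfold_locales (simp add: smooth_jordan_param_def)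

lemma continuous_on_g: "continuous_on S g"
  using smooth_jordan_param C1_differentiable_imp_continuous_on continuous_on_subset
  unfolding smooth_jordan_param_def by blast

lemma g_frac: "g (frac t) = g t"
  using periodic.plus_of_int[of t "- \<lfloor>t\<rfloor>"] by (simp add: frac_def)

lemma g_eq_iff: "g x = g y \<longleftrightarrow> x - y \<in> \<int>"
proof
  assume "g x = g y"
  then have "g (frac x) = g (frac y)"
    by (simp add: g_frac)
  then have "frac x = frac y"
    using smooth_jordan_param by (auto simp: smooth_jordan_param_def inj_on_def frac_lt_1)
  then show "x - y \<in> \<int>"
    using frac_diff_eq frac_eq_0_iff by blast
next
  assume "x - y \<in> \<int>"
  then obtain n where "x = y + of_int n"
    by (metis Ints_cases add.commute diff_add_cancel)
  then show "g x = g y"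
    by (simp add: periodic.plus_of_int)
qed

lemma g_eq_imp_eq: "g x = g y \<Longrightarrow> \<bar>x - y\<bar> < 1 \<Longrightarrow> x = y"
  using Ints_nonzero_abs_less1 g_eq_iff by fastforce

lemma inj_on_g_atLeastLessThan: "inj_on g {c..<c+1}"
  by (rule inj_onI, rule g_eq_imp_eq) auto

lemma inj_on_g_greaterThanAtMost: "inj_on g {c<..c+1}"
  by (rule inj_onI, rule g_eq_imp_eq) auto

lemma g_add_frac_diff: "g (x + frac (u - x)) = g u"
  unfolding g_eq_iff by (simp add: frac_def)

lemma curve_eq_range: "curve g = range g"
proof -
  have "g u \<in> g ` {0..<1}" for u
    using g_frac[of u] frac_ge_0[of u] frac_lt_1[of u] by (metis atLeastLessThan_iff image_eqI)
  then show ?thesis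
    unfolding curve_def by auto
qed

lemma curve_eq_image: "curve g = g ` {c..c+1}"
proof -
  have "g u \<in> g ` {c..c+1}" for u
    using g_add_frac_diff[of c u] frac_lt_1[of "u - c"]
    by (intro image_eqI[of _ g "c + frac (u - c)"]) auto
  then show ?thesis
    unfolding curve_eq_range by auto
qed

lemma compact_curve: "compact (curve g)"
  using curve_eq_image[of 0] compact_continuous_image[OF continuous_on_g compact_Icc] by simp

lemma connected_curve: "connected (curve g)"
  using curve_eq_image[of 0] connected_continuous_image[OF continuous_on_g connected_Icc] by simp

lemma param_g: "param g (g u) = frac u"
  unfolding param_def
proof (rule the_equality)
  show "frac u \<in> {0..<1} \<and> g (frac u) = g u"
    by (simp add: g_frac frac_lt_1)
next
  fix s assume "s \<in> {0..<1} \<and> g s = g u"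
  then show "s = frac u"
    using inj_on_g_atLeastLessThan[of 0] g_frac[of u] by (auto simp: inj_on_def frac_lt_1)
qed

lemma g_param: "z \<in> curve g \<Longrightarrow> g (param g z) = z"
  unfolding curve_eq_range using param_g g_frac by auto

lemma pdist_g: "pdist g (g x) (g y) = frac (y - x)"
  unfolding pdist_def param_g frac_unique_iff
  using frac_lt_1[of "y - x"] by (simp add: frac_def flip: of_int_diff)

lemma pdist_eq_0_iff: "a \<in> curve g \<Longrightarrow> t \<in> curve g \<Longrightarrow> pdist g a t = 0 \<longleftrightarrow> t = a"
  unfolding curve_eq_range by (auto simp: pdist_g g_eq_iff)

lemma g_param_add_pdist: "a \<in> curve g \<Longrightarrow> b \<in> curve g \<Longrightarrow> g (param g a + pdist g a b) = b"
  unfolding pdist_def using g_add_frac_diff g_param by simp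

lemma open_arc_subset_curve: "open_arc g a b \<subseteq> curve g"
  unfolding open_arc_def by auto

lemma open_arc_self: "a \<in> curve g \<Longrightarrow> open_arc g a a = curve g - {a}"
  unfolding open_arc_def using pdist_eq_0_iff pdist_def frac_ge_0 by (force simp: order_le_less)

lemma open_arc_g:
  assumes "x < y" "y \<le> x + 1"
  shows "open_arc g (g x) (g y) = g ` {x<..<y}"
proof -
  have before_end: "(r < pdist g (g x) (g y) \<or> g x = g y) \<longleftrightarrow> r < y - x" if "r < 1" for r
  proof (cases "y = x + 1")
    case True
    then show ?thesis using that by (simp add: periodic.plus_period)
  next
    case False
    then have "g x \<noteq> g y" "pdist g (g x) (g y) = y - x"
      using assms g_eq_imp_eq[of x y] by (auto simp: pdist_g frac_eq)
    then show ?thesis by simp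
  qed
  have mem: "g u \<in> open_arc g (g x) (g y) \<longleftrightarrow> 0 < frac (u - x) \<and> frac (u - x) < y - x" for u
    unfolding open_arc_def mem_Collect_eq pdist_g[of x u] before_end[OF frac_lt_1]
    using curve_eq_range by blast
  show ?thesis
  proof (intro set_eqI iffI)
    fix t assume t: "t \<in> open_arc g (g x) (g y)"
    then obtain u where "t = g u"
      using open_arc_subset_curve curve_eq_range by blast
    then show "t \<in> g ` {x<..<y}"
      using t mem g_add_frac_diff[of x u] by (intro image_eqI[of _ g "x + frac (u - x)"]) auto
  next
    fix t assume "t \<in> g ` {x<..<y}"
    then obtain s where "t = g s" "x < s" "s < y" by auto
    then show "t \<in> open_arc g (g x) (g y)"
      using mem[of s] assms by (simp add: frac_eq)
  qed
qed

lemma closure_image_g: "x < y \<Longrightarrow> closure (g ` {x<..<y}) = g ` {x..y}"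
  by (rule closure_image_greaterThanLessThan[OF continuous_on_g])

lemma obtain_arc_params:
  assumes "a \<in> curve g" "b \<in> curve g" "a \<noteq> b"
  obtains x y where "a = g x" "b = g y" "x < y" "y < x + 1"
proof
  show "a = g (param g a)" "b = g (param g a + pdist g a b)"
    using assms g_param g_param_add_pdist by auto
  have "pdist g a b \<noteq> 0"
    using assms pdist_eq_0_iff by auto
  then show "param g a < param g a + pdist g a b"
    using frac_ge_0 unfolding pdist_def by (simp add: order_le_less)
  show "param g a + pdist g a b < param g a + 1"
    unfolding pdist_def using frac_lt_1 by simp
qed

lemma
  assumes "a \<in> curve g" "b \<in> curve g" "a \<noteq> b"
  shows open_arc_complement: "curve g - {a, b} = open_arc g a b \<union> open_arc g b a"
    and open_arc_separated: "open_arc g a b \<inter> closure (open_arc g b a) = {}"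
    and connected_open_arc: "connected (open_arc g a b)"
    and open_arc_nonempty: "open_arc g a b \<noteq> {}"
proof -
  obtain x y where a: "a = g x" and b: "b = g y" and xy: "x < y" "y < x + 1"
    using obtain_arc_params assms by metis
  have a_end: "a = g (x + 1)"
    using a by (simp add: periodic.plus_period)
  have arc: "open_arc g a b = g ` {x<..<y}"
    unfolding a b using xy by (intro open_arc_g) auto
  have arc': "open_arc g b a = g ` {y<..<x+1}"
    unfolding b a_end using xy by (intro open_arc_g) auto
  have "g ` {x<..<y} \<inter> g ` {y..x+1} = {}"
    using xy by (subst inj_on_image_Int[OF inj_on_g_greaterThanAtMost, symmetric]) auto
  then show "open_arc g a b \<inter> closure (open_arc g b a) = {}"
    using xy unfolding arc arc' by (simp add: closure_image_g)
  have "g w \<notin> g ` {x<..<y}" if "w \<in> {y, x + 1}" for w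
    using that xy by (subst inj_on_image_mem_iff[OF inj_on_g_greaterThanAtMost[of x]]) auto
  then have "a \<notin> g ` {x<..<y}" "b \<notin> g ` {x<..<y}"
    unfolding a_end b by auto
  moreover have "g w \<notin> g ` {y<..<x+1}" if "w \<in> {x, y}" for w
    using that xy by (subst inj_on_image_mem_iff[OF inj_on_g_atLeastLessThan[of x]]) auto
  then have "a \<notin> g ` {y<..<x+1}" "b \<notin> g ` {y<..<x+1}"
    unfolding a b by auto
  moreover have "{x..x+1} = {x<..<y} \<union> {y<..<x+1} \<union> {x, y, x + 1}"
    using xy by auto
  ultimately show "curve g - {a, b} = open_arc g a b \<union> open_arc g b a"
    unfolding arc arc' curve_eq_image[of x] using xy a a_end b by auto
  show "connected (open_arc g a b)"
    unfolding arc by (intro connected_continuous_image continuous_on_g) auto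
  show "open_arc g a b \<noteq> {}"
    unfolding arc using xy by auto
qed

lemma islimpt_image_g:
  assumes "s islimpt (g -` T)"
  shows "g s islimpt T"
  unfolding islimpt_approachable
proof (intro allI impI)
  fix e :: real assume "0 < e"
  then obtain d where "0 < d" and d: "\<And>s'. dist s' s < d \<Longrightarrow> dist (g s') (g s) < e"
    using continuous_on_g[of UNIV] by (metis continuous_on_iff UNIV_I)
  obtain s' where s': "g s' \<in> T" "s' \<noteq> s" "dist s' s < min d 1"
    using assms \<open>0 < d\<close> unfolding islimpt_approachable
    by (metis min_less_iff_conj vimage_eq zero_less_one)
  then have "g s' \<noteq> g s"
    using g_eq_imp_eq by (force simp: dist_real_def)
  then show "\<exists>t\<in>T. t \<noteq> g s \<and> dist t (g s) < e"
    using s' d by auto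
qed


lemma circle_coord_g: "circle_coord g (g u) = exp (2 * of_real pi * \<i> * of_real u)"
  unfolding circle_coord_def param_g exp_2pi_eq_iff by (simp add: frac_def)

lemma norm_circle_coord: "norm (circle_coord g z) = 1"
  unfolding circle_coord_def by simp

lemma inj_on_circle_coord: "inj_on (circle_coord g) (curve g)"
  unfolding curve_eq_range by (auto intro!: inj_onI simp: circle_coord_g exp_2pi_eq_iff g_eq_iff)

lemma continuous_on_circle_coord: "continuous_on (curve g) (circle_coord g)"
proof (rule continuous_from_closed_graph[of "sphere 0 1"])
  show "circle_coord g \<in> curve g \<rightarrow> sphere 0 1"
    using norm_circle_coord by auto
  have "(\<lambda>z. (z, circle_coord g z)) ` curve g = (\<lambda>s. (g s, exp (2 * of_real pi * \<i> * of_real s))) ` {0..1}"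
    unfolding curve_eq_image[of 0] by (auto simp: circle_coord_g)
  moreover have "compact ((\<lambda>s. (g s, exp (2 * of_real pi * \<i> * of_real s))) ` {0..1})"
    by (intro compact_continuous_image continuous_on_Pair continuous_on_g continuous_intros) auto
  ultimately show "closed ((\<lambda>z. (z, circle_coord g z)) ` curve g)"
    by (simp add: compact_imp_closed)
qed simp

(* circle_coord identifies the curve with the unit circle, so a continuous logarithm of
   circle_coord \<circ> \<sigma> \<circ> g yields the lift. *)
lemma lift_exists:
  assumes "continuous_on (curve g) \<sigma>" "\<sigma> ` curve g \<subseteq> curve g"
  obtains F where "continuous_on UNIV F" "\<And>s. g (F s) = \<sigma> (g s)"
proof -
  define w where "w s = circle_coord g (\<sigma> (g s))" for s
  have w_cont: "continuous_on UNIV w"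
    unfolding w_def using assms curve_eq_range
    by (intro continuous_on_compose2[OF continuous_on_circle_coord]
        continuous_on_compose2[OF assms(1) continuous_on_g]) auto
  have norm_w: "norm (w s) = 1" for s
    unfolding w_def by (rule norm_circle_coord)
  then have w_nonzero: "w s \<noteq> 0" for s
    by (metis norm_zero zero_neq_one)
  obtain L where L: "continuous_on UNIV L" "\<And>s. s \<in> UNIV \<Longrightarrow> w s = exp (L s)"
    using continuous_logarithm_on_contractible[OF w_cont contractible_UNIV w_nonzero] by blast
  define F where "F s = Im (L s) / (2 * pi)" for s
  have "g (F s) = \<sigma> (g s)" for s
  proof -
    have "Re (L s) = 0"
      using L(2)[of s] norm_w[of s] by simp
    then have "L s = 2 * of_real pi * \<i> * of_real (F s)"
      unfolding F_def by (simp add: complex_eq_iff)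
    then have "circle_coord g (g (F s)) = circle_coord g (\<sigma> (g s))"
      using L(2)[of s] unfolding w_def circle_coord_g by simp
    moreover have "g (F s) \<in> curve g" "\<sigma> (g s) \<in> curve g"
      using assms(2) curve_eq_range by auto
    ultimately show ?thesis
      using inj_on_circle_coord by (auto dest: inj_onD)
  qed
  moreover have "continuous_on UNIV F"
    unfolding F_def by (intro continuous_intros L(1)) simp
  ultimately show ?thesis
    using that by blast
qed

lemma lift_degree:
  assumes "continuous_on UNIV F" "\<And>s. g (F s) = \<sigma> (g s)"
  obtains n where "n \<in> \<int>" "\<And>s. F (s + 1) = F s + n"
proof -
  define D where "D s = F (s + 1) - F s" for s
  have D_Ints: "D s \<in> \<int>" for s
    using assms(2)[of "s + 1"] assms(2)[of s] unfolding D_def g_eq_iff[symmetric]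
    by (simp add: periodic.plus_period)
  have "D constant_on UNIV"
  proof (rule continuous_discrete_range_constant)
    show "continuous_on UNIV D"
      unfolding D_def by (intro continuous_intros continuous_on_compose2[OF assms(1)]) auto
    show "\<exists>e>0. \<forall>y. y \<in> UNIV \<and> D y \<noteq> D x \<longrightarrow> e \<le> norm (D y - D x)" for x
      using Ints_nonzero_abs_ge1[of "D _ - D x"] D_Ints Ints_diff by (intro exI[of _ 1]) auto
  qed simp
  then obtain n where "\<And>s. D s = n"
    unfolding constant_on_def by blast
  then show ?thesis
    using that D_Ints unfolding D_def by (metis add_diff_cancel_left' diff_add_cancel add.commute)
qed

(* Over [0, 1] the function F s - s changes by n - 1, so it takes an integer value. *)
lemma fixed_point_if_lift_degree_ne_1:
  assumes "continuous_on UNIV F" "\<And>s. g (F s) = \<sigma> (g s)" "\<And>s. F (s + 1) = F s + n"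
    and "n \<in> \<int>" "n \<noteq> 1"
  obtains t where "t \<in> curve g" "\<sigma> t = t"
proof -
  have "1 \<le> \<bar>(F 1 - 1) - (F 0 - 0)\<bar>"
    using assms(3)[of 0] assms(4,5) Ints_nonzero_abs_ge1[of "n - 1"] by simp
  then obtain s where "F s - s \<in> \<int>"
    using IVT_Ints[of 0 1 "\<lambda>s. F s - s"] assms(1)
    by (metis continuous_on_diff continuous_on_id continuous_on_subset subset_UNIV zero_le_one)
  then have "\<sigma> (g s) = g s"
    using assms(2) g_eq_iff by metis
  then show ?thesis
    using that curve_eq_range by blast
qed

(* F is strictly increasing on the period [x, x + 1] starting at the parameter x of a, so it keeps
   the order of the parameters of b and c measured from x. *)
lemma preserves_orientation_if_lift_degree_1:
  assumes "continuous_on UNIV F" "\<And>s. g (F s) = \<sigma> (g s)" "\<And>s. F (s + 1) = F s + 1"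
    and "inj_on \<sigma> (curve g)"
  shows "preserves_orientation g \<sigma>"
  unfolding preserves_orientation_def
proof (intro ballI impI)
  fix a b c assume abc: "a \<in> curve g" "b \<in> curve g" "c \<in> curve g" "a \<noteq> b \<and> b \<noteq> c \<and> a \<noteq> c"
    and "cyc g a b c"
  define x where "x = param g a"
  have "inj_on F {x..x+1}"
  proof (rule inj_onI)
    fix u v assume uv: "u \<in> {x..x+1}" "v \<in> {x..x+1}" "F u = F v"
    then have "\<sigma> (g u) = \<sigma> (g v)"
      using assms(2) by metis
    then have "g u = g v"
      using assms(4) curve_eq_range by (auto dest: inj_onD)
    then have "u = v \<or> \<bar>u - v\<bar> = 1"
      using Ints_nonzero_abs_ge1[of "u - v"] uv(1,2) g_eq_iff by fastforce
    moreover have "u = x \<and> v = x + 1 \<or> u = x + 1 \<and> v = x" if "\<bar>u - v\<bar> = 1"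
      using uv(1,2) that by (cases "u \<le> v") auto
    ultimately show "u = v"
      using uv(3) assms(3)[of x] by auto
  qed
  then have mono: "F u < F v" if "x \<le> u" "u < v" "v \<le> x + 1" for u v
    using continuous_inj_on_less[OF continuous_on_subset[OF assms(1)]] assms(3)[of x] that by simp
  define db dc where "db = pdist g a b" and "dc = pdist g a c"
  have "0 < db" "db < dc" "dc < 1"
    using abc \<open>cyc g a b c\<close> pdist_eq_0_iff[of a b] frac_ge_0 frac_lt_1
    unfolding db_def dc_def cyc_def pdist_def by (auto simp: order_le_less)
  then have "F x < F (x + db)" "F (x + db) < F (x + dc)" "F (x + dc) < F x + 1"
    using mono[of x "x + db"] mono[of "x + db" "x + dc"] mono[of "x + dc" "x + 1"] assms(3)[of x]
    by simp_all
  moreover have "\<sigma> a = g (F x)" "\<sigma> b = g (F (x + db))" "\<sigma> c = g (F (x + dc))"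
    using abc g_param g_param_add_pdist assms(2) unfolding x_def db_def dc_def by auto
  ultimately show "cyc g (\<sigma> a) (\<sigma> b) (\<sigma> c)"
    by (simp add: cyc_def pdist_g frac_eq)
qed

end

section \<open>Continuous bijections of the curve and their invariant arcs\<close>

lemma preserves_orientation_comp:
  assumes "preserves_orientation g \<sigma>" "preserves_orientation g \<tau>"
    and "\<tau> ` curve g \<subseteq> curve g" "inj_on \<tau> (curve g)"
  shows "preserves_orientation g (\<sigma> \<circ> \<tau>)"
  unfolding preserves_orientation_def
proof (intro ballI impI)
  fix a b c assume abc: "a \<in> curve g" "b \<in> curve g" "c \<in> curve g"
    and distinct: "a \<noteq> b \<and> b \<noteq> c \<and> a \<noteq> c" and "cyc g a b c"
  have "\<tau> a \<in> curve g" "\<tau> b \<in> curve g" "\<tau> c \<in> curve g"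
    using abc assms(3) by auto
  moreover have "\<tau> a \<noteq> \<tau> b \<and> \<tau> b \<noteq> \<tau> c \<and> \<tau> a \<noteq> \<tau> c"
    using abc distinct assms(4) by (auto dest: inj_onD)
  moreover have "cyc g (\<tau> a) (\<tau> b) (\<tau> c)"
    using assms(2) abc distinct \<open>cyc g a b c\<close> unfolding preserves_orientation_def by blast
  ultimately show "cyc g ((\<sigma> \<circ> \<tau>) a) ((\<sigma> \<circ> \<tau>) b) ((\<sigma> \<circ> \<tau>) c)"
    using assms(1) unfolding preserves_orientation_def by simp
qed

lemma two_blocks_image_cases:
  assumes "X \<union> Y = A \<union> B" "X \<inter> Y = {}" "A \<inter> B = {}" "A \<noteq> {}" "B \<noteq> {}"
    and "X \<subseteq> A \<or> X \<subseteq> B" "Y \<subseteq> A \<or> Y \<subseteq> B"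
  shows "X = A \<and> Y = B \<or> X = B \<and> Y = A"
proof -
  have "\<not> (X \<subseteq> A \<and> Y \<subseteq> A)" "\<not> (X \<subseteq> B \<and> Y \<subseteq> B)"
    using assms(1,3-5) by blast+
  moreover have "X = A \<and> Y = B" if "X \<subseteq> A" "Y \<subseteq> B"
    using that assms(1-3) by blast
  moreover have "X = B \<and> Y = A" if "X \<subseteq> B" "Y \<subseteq> A"
    using that assms(1-3) by blast
  ultimately show ?thesis
    using assms(6,7) by blast
qed

locale curve_bijection = jordan_curve +
  fixes \<alpha> :: "complex \<Rightarrow> complex"
  assumes continuous_on_\<alpha>: "continuous_on (curve g) \<alpha>"
    and bij_betw_\<alpha>: "bij_betw \<alpha> (curve g) (curve g)"
begin

lemma image_\<alpha>: "\<alpha> ` curve g = curve g"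
  using bij_betw_\<alpha> by (simp add: bij_betw_def)

lemma inj_on_\<alpha>: "inj_on \<alpha> (curve g)"
  using bij_betw_\<alpha> by (simp add: bij_betw_def)

lemma curve_bijection_funpow: "curve_bijection g (\<alpha> ^^ n)"
proof -
  have "continuous_on (curve g) (\<alpha> ^^ n) \<and> bij_betw (\<alpha> ^^ n) (curve g) (curve g)"
  proof (induction n)
    case (Suc n)
    then show ?case
      using continuous_on_\<alpha> bij_betw_\<alpha>
      by (metis continuous_on_compose bij_betw_trans bij_betw_imp_surj_on funpow.simps(2))
  qed (simp add: bij_betw_def)
  then show ?thesis
    using jordan_curve_axioms by (simp add: curve_bijection_def curve_bijection_axioms_def)
qed

lemma preserves_orientation_funpow:
  assumes "preserves_orientation g \<alpha>"
  shows "preserves_orientation g (\<alpha> ^^ n)"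
proof (induction n)
  case 0
  then show ?case
    unfolding preserves_orientation_def by simp
next
  case (Suc n)
  interpret iterate: curve_bijection g "\<alpha> ^^ n"
    by (rule curve_bijection_funpow)
  have "preserves_orientation g (\<alpha> \<circ> \<alpha> ^^ n)"
    by (rule preserves_orientation_comp[OF assms Suc]) (use iterate.image_\<alpha> iterate.inj_on_\<alpha> in auto)
  then show ?case
    by (simp add: comp_def)
qed

lemma fixed_point_if_not_preserves_orientation:
  assumes "\<not> preserves_orientation g \<alpha>"
  obtains t where "t \<in> curve g" "\<alpha> t = t"
proof -
  obtain F where F: "continuous_on UNIV F" "\<And>s. g (F s) = \<alpha> (g s)"
    using lift_exists continuous_on_\<alpha> image_\<alpha> by blast
  obtain n where "n \<in> \<int>" "\<And>s. F (s + 1) = F s + n"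
    using lift_degree[OF F] by blast
  moreover have "n \<noteq> 1"
    using preserves_orientation_if_lift_degree_1[OF F] calculation inj_on_\<alpha> assms by auto
  ultimately show ?thesis
    using fixed_point_if_lift_degree_ne_1[OF F] that by blast
qed

lemma image_open_arc_cases:
  assumes "a \<in> curve g" "b \<in> curve g" "a \<noteq> b" "\<alpha> ` {a, b} = {a, b}"
  shows "\<alpha> ` open_arc g a b = open_arc g a b \<and> \<alpha> ` open_arc g b a = open_arc g b a \<or>
         \<alpha> ` open_arc g a b = open_arc g b a \<and> \<alpha> ` open_arc g b a = open_arc g a b"
proof -
  define A B where "A = open_arc g a b" and "B = open_arc g b a"
  have AB: "A \<union> B = curve g - {a, b}"
    unfolding A_def B_def using open_arc_complement assms by simp
  have "\<alpha> ` A \<union> \<alpha> ` B = \<alpha> ` (curve g - {a, b})"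
    unfolding AB[symmetric] by (rule image_Un[symmetric])
  also have "\<dots> = A \<union> B"
    unfolding AB using inj_on_image_set_diff[OF inj_on_\<alpha>, of "curve g" "{a, b}"] assms(1,2,4) image_\<alpha>
    by simp
  finally have image_AB: "\<alpha> ` A \<union> \<alpha> ` B = A \<union> B" .
  have "A \<inter> B = {}"
    unfolding A_def B_def using open_arc_separated[OF assms(1-3)] closure_subset by blast
  moreover have "\<alpha> ` A \<inter> \<alpha> ` B = \<alpha> ` (A \<inter> B)"
    unfolding A_def B_def by (rule inj_on_image_Int[OF inj_on_\<alpha> open_arc_subset_curve open_arc_subset_curve, symmetric])
  ultimately have "\<alpha> ` A \<inter> \<alpha> ` B = {}"
    by simp
  have "A \<noteq> {}" "B \<noteq> {}"
    unfolding A_def B_def using open_arc_nonempty assms by auto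
  have connected: "connected (\<alpha> ` open_arc g x y)" if "x \<in> curve g" "y \<in> curve g" "x \<noteq> y" for x y
    by (meson connected_continuous_image continuous_on_subset continuous_on_\<alpha> connected_open_arc
        open_arc_subset_curve that)
  have separated: "separatedin euclidean A B"
    unfolding A_def B_def using open_arc_separated assms by (auto simp: separatedin_def)
  have into: "\<alpha> ` X \<subseteq> A \<or> \<alpha> ` X \<subseteq> B" if "X \<in> {A, B}" for X
  proof -
    have "connected (\<alpha> ` X)"
      using that connected assms unfolding A_def B_def by auto
    moreover have "\<alpha> ` X \<subseteq> A \<union> B"
      using that image_AB by blast
    ultimately show ?thesis
      using connectedin_subset_separated_union[of euclidean "\<alpha> ` X" A B] separated by simp
  qed
  show ?thesis
    using two_blocks_image_cases[OF image_AB \<open>\<alpha> ` A \<inter> \<alpha> ` B = {}\<close> \<open>A \<inter> B = {}\<close>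
        \<open>A \<noteq> {}\<close> \<open>B \<noteq> {}\<close> into into]
    unfolding A_def B_def by simp
qed

lemma image_open_arc_if_meets:
  assumes "a \<in> curve g" "b \<in> curve g" "a \<noteq> b" "\<alpha> ` {a, b} = {a, b}"
    and "\<alpha> ` open_arc g a b \<inter> open_arc g a b \<noteq> {} \<or> \<alpha> ` open_arc g b a \<inter> open_arc g b a \<noteq> {}"
  shows "\<alpha> ` open_arc g a b = open_arc g a b"
proof -
  have "open_arc g a b \<inter> open_arc g b a = {}"
    using open_arc_separated[OF assms(1-3)] closure_subset by blast
  then show ?thesis
    using image_open_arc_cases[OF assms(1-4)] assms(5) by (auto simp: Int_commute)
qed

lemma image_open_arc_if_preserves_orientation:
  assumes "preserves_orientation g \<alpha>" "a \<in> curve g" "b \<in> curve g" "a \<noteq> b" "\<alpha> a = a" "\<alpha> b = b"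
  shows "\<alpha> ` open_arc g a b = open_arc g a b"
proof (rule image_open_arc_if_meets)
  have "\<alpha> t \<in> open_arc g a b" if t: "t \<in> open_arc g a b" for t
  proof -
    have "t \<in> curve g" "0 < pdist g a t" "cyc g a t b"
      using t assms(4) unfolding open_arc_def cyc_def by auto
    then have "t \<noteq> a" "t \<noteq> b"
      using pdist_eq_0_iff[OF assms(2) assms(2)] unfolding cyc_def by auto
    have "cyc g (\<alpha> a) (\<alpha> t) (\<alpha> b)"
      using assms(1)[unfolded preserves_orientation_def, rule_format, OF assms(2) \<open>t \<in> curve g\<close> assms(3)]
        \<open>t \<noteq> a\<close> \<open>t \<noteq> b\<close> assms(4) \<open>cyc g a t b\<close> by blast
    moreover have "\<alpha> t \<in> curve g" "\<alpha> t \<noteq> a"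
      using \<open>t \<in> curve g\<close> \<open>t \<noteq> a\<close> assms(2,5) image_\<alpha> inj_on_\<alpha> by (auto dest: inj_onD)
    ultimately have "cyc g a (\<alpha> t) b" "\<alpha> t \<in> curve g" "\<alpha> t \<noteq> a"
      using assms(5,6) by simp_all
    moreover from this have "0 < pdist g a (\<alpha> t)"
      using pdist_eq_0_iff[OF assms(2)] frac_ge_0 unfolding pdist_def by (force simp: order_le_less)
    ultimately show ?thesis
      unfolding open_arc_def cyc_def by auto
  qed
  moreover obtain t where "t \<in> open_arc g a b"
    using open_arc_nonempty[OF assms(2-4)] by blast
  ultimately show "\<alpha> ` open_arc g a b \<inter> open_arc g a b \<noteq> {} \<or> \<alpha> ` open_arc g b a \<inter> open_arc g b a \<noteq> {}"
    by blast
qed (use assms in auto)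

lemma image_open_arc_self:
  assumes "a \<in> curve g" "\<alpha> a = a"
  shows "\<alpha> ` open_arc g a a = open_arc g a a"
  using assms image_\<alpha> inj_on_image_set_diff[OF inj_on_\<alpha>, of "curve g" "{a}"]
  by (simp add: open_arc_self)

(* Either \<alpha> \<circ> \<alpha> has a fixed point off the endpoints, which pins down both arcs, or \<alpha> permutes
   the endpoints and hence keeps or swaps the two arcs. *)
lemma funpow_2_image_open_arc:
  assumes "a \<in> curve g" "b \<in> curve g" "a \<noteq> b" "(\<alpha> ^^ 2) a = a" "(\<alpha> ^^ 2) b = b"
  shows "(\<alpha> ^^ 2) ` open_arc g a b = open_arc g a b"
proof -
  interpret square: curve_bijection g "\<alpha> ^^ 2"
    by (rule curve_bijection_funpow)
  show ?thesis
  proof (cases "\<exists>c \<in> curve g - {a, b}. (\<alpha> ^^ 2) c = c")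
    case True
    then obtain c where "c \<in> open_arc g a b \<union> open_arc g b a" "(\<alpha> ^^ 2) c = c"
      using open_arc_complement[OF assms(1-3)] by blast
    then have "(\<alpha> ^^ 2) ` open_arc g a b \<inter> open_arc g a b \<noteq> {} \<or>
        (\<alpha> ^^ 2) ` open_arc g b a \<inter> open_arc g b a \<noteq> {}"
      by (metis UnE disjoint_iff image_eqI)
    then show ?thesis
      using square.image_open_arc_if_meets[OF assms(1-3)] assms(4,5) by simp
  next
    case False
    have "(\<alpha> ^^ 2) (\<alpha> x) = \<alpha> x" if "(\<alpha> ^^ 2) x = x" for x
      using that by (simp add: numeral_2_eq_2)
    then have "\<alpha> a \<in> {a, b}" "\<alpha> b \<in> {a, b}" "\<alpha> a \<noteq> \<alpha> b"
      using False assms image_\<alpha> inj_on_\<alpha> by (auto dest: inj_onD)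
    then have "\<alpha> ` {a, b} = {a, b}"
      by auto
    from image_open_arc_cases[OF assms(1-3) this]
    have "\<alpha> ` \<alpha> ` open_arc g a b = open_arc g a b"
      by (elim disjE conjE) simp_all
    then show ?thesis
      by (simp add: numeral_2_eq_2 image_comp)
  qed
qed

lemma funpow_mult_m_image_open_arc:
  assumes "a \<in> Lam g \<alpha>" "b \<in> Lam g \<alpha>"
  shows "(\<alpha> ^^ mult_m g \<alpha>) ` open_arc g a b = open_arc g a b"
proof -
  interpret iterate: curve_bijection g "\<alpha> ^^ mult_m g \<alpha>"
    by (rule curve_bijection_funpow)
  have ab: "a \<in> curve g" "b \<in> curve g" "(\<alpha> ^^ mult_m g \<alpha>) a = a" "(\<alpha> ^^ mult_m g \<alpha>) b = b"
    using assms unfolding Lam_def by auto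
  consider "a = b" | "a \<noteq> b" "preserves_orientation g \<alpha>" | "a \<noteq> b" "mult_m g \<alpha> = 2"
    by (cases "a = b"; cases "preserves_orientation g \<alpha>") (simp_all add: mult_m_def)
  then show ?thesis
  proof cases
    case 1
    then show ?thesis
      using iterate.image_open_arc_self ab by simp
  next
    case 2
    then show ?thesis
      using iterate.image_open_arc_if_preserves_orientation preserves_orientation_funpow ab by simp
  next
    case 3
    then show ?thesis
      using funpow_2_image_open_arc ab by simp
  qed
qed

lemma closed_fixed_points: "closed {t \<in> curve g. \<alpha> t = t}"
proof -
  have "closed {t \<in> curve g. \<alpha> t - t = 0}"
    by (intro continuous_closed_preimage_constant continuous_intros continuous_on_\<alpha>
        compact_imp_closed compact_curve)
  then show ?thesis
    by simp
qed

lemma closed_Lam: "closed (Lam g \<alpha>)"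
  unfolding Lam_def using curve_bijection.closed_fixed_points[OF curve_bijection_funpow] .

lemma closed_Ybd: "closed (Ybd g \<alpha>)"
  unfolding Ybd_def Phi_def by (intro closed_Int closed_Lam) auto

lemma Phi_subset_curve: "Phi g \<alpha> \<subseteq> curve g"
  unfolding Phi_def by (intro closure_minimal compact_imp_closed compact_curve) auto

lemma curve_subset_Lam_Un_Phi: "curve g \<subseteq> Lam g \<alpha> \<union> Phi g \<alpha>"
  unfolding Lam_def Phi_def using closure_subset[of "{t \<in> curve g. (\<alpha> ^^ mult_m g \<alpha>) t \<noteq> t}"]
  by blast

lemma connected_disjoint_Ybd_cases:
  assumes "A \<subseteq> curve g" "connected A" "A \<inter> Ybd g \<alpha> = {}"
  shows "A \<subseteq> curve g - Phi g \<alpha> \<or> A \<subseteq> Phi g \<alpha> - Lam g \<alpha>"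
proof -
  have "closed (Phi g \<alpha>)" "A \<subseteq> Lam g \<alpha> \<union> Phi g \<alpha>" "Lam g \<alpha> \<inter> Phi g \<alpha> \<inter> A = {}"
    using assms curve_subset_Lam_Un_Phi unfolding Ybd_def Phi_def by auto
  then have "Lam g \<alpha> \<inter> A = {} \<or> Phi g \<alpha> \<inter> A = {}"
    using assms(2) closed_Lam unfolding connected_closed by blast
  then show ?thesis
    using assms(1) curve_subset_Lam_Un_Phi by blast
qed

lemma Ybd_nonempty:
  assumes "Lam g \<alpha> \<noteq> {}" "Phi g \<alpha> \<noteq> {}"
  shows "Ybd g \<alpha> \<noteq> {}"
  using connected_disjoint_Ybd_cases[OF _ connected_curve] assms Phi_subset_curve
  unfolding Lam_def by blast

lemma Lam_nonempty:
  assumes "is_periodic_point (curve g) \<alpha> \<tau>"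
  shows "Lam g \<alpha> \<noteq> {}"
proof (cases "preserves_orientation g \<alpha>")
  case True
  have "\<exists>n>0. \<exists>\<tau>\<in>curve g. (\<alpha> ^^ n) \<tau> = \<tau>"
    using assms unfolding is_periodic_point_def by blast
  from LeastI_ex[OF this] show ?thesis
    using True unfolding Lam_def mult_m_def by auto
next
  case False
  then obtain t where "t \<in> curve g" "\<alpha> t = t"
    by (rule fixed_point_if_not_preserves_orientation)
  then show ?thesis
    using False unfolding Lam_def mult_m_def by (auto simp: numeral_2_eq_2)
qed

end

section \<open>Decomposition into invariant arcs\<close>

definition arc_decomposition ::
  "(real \<Rightarrow> complex) \<Rightarrow> (complex \<Rightarrow> complex) \<Rightarrow> (complex \<Rightarrow> real) \<Rightarrow>
    complex set set \<Rightarrow> complex set set \<Rightarrow> complex set set \<Rightarrow> bool" where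
  "arc_decomposition g \<alpha> f W G V \<longleftrightarrow>
     finite W \<and> finite G \<and> finite V \<and>
     W \<inter> G = {} \<and> W \<inter> V = {} \<and> G \<inter> V = {} \<and> pairwise disjnt (W \<union> G \<union> V) \<and>
     (\<forall>\<omega>\<in>W. adm_arc g \<alpha> \<omega> \<and> \<omega> \<subseteq> curve g - Phi g \<alpha>) \<and>
     (\<forall>\<gamma>\<in>G. adm_arc g \<alpha> \<gamma> \<and> \<gamma> \<subseteq> Phi g \<alpha> - Lam g \<alpha>) \<and>
     (\<forall>v\<in>V. adm_arc g \<alpha> v \<and> v \<subseteq> curve g \<and> closure v \<inter> Ylim g \<alpha> \<noteq> {} \<and>
             (\<forall>t\<in>closure v. f t > 0)) \<and>
     curve g = (\<Union>\<omega>\<in>W. closure \<omega>) \<union> (\<Union>\<gamma>\<in>G. closure \<gamma>) \<union> (\<Union>v\<in>V. closure v)"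

context curve_bijection
begin

lemma arc_decomposition_of_arcs:
  assumes "finite \<A>" "pairwise disjnt \<A>"
    and adm: "\<And>A. A \<in> \<A> \<Longrightarrow> adm_arc g \<alpha> A \<and> connected A"
    and meets: "\<And>A. A \<in> \<A> \<Longrightarrow> A \<inter> Ybd g \<alpha> \<noteq> {} \<Longrightarrow>
      closure A \<inter> Ylim g \<alpha> \<noteq> {} \<and> (\<forall>t\<in>closure A. 0 < f t)"
    and cover: "curve g = (\<Union>A\<in>\<A>. closure A)"
  shows "\<exists>W G V. arc_decomposition g \<alpha> f W G V"
proof -
  define V where "V = {A\<in>\<A>. A \<inter> Ybd g \<alpha> \<noteq> {}}"
  define W where "W = {A\<in>\<A>. A \<inter> Ybd g \<alpha> = {} \<and> A \<subseteq> curve g - Phi g \<alpha>}"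
  define G where "G = {A\<in>\<A>. A \<inter> Ybd g \<alpha> = {} \<and> \<not> A \<subseteq> curve g - Phi g \<alpha>}"
  have WGV: "W \<union> G \<union> V = \<A>"
    unfolding W_def G_def V_def by auto
  have in_curve: "A \<subseteq> curve g" if "A \<in> \<A>" for A
    using adm[OF that] open_arc_subset_curve unfolding adm_arc_def by blast
  have "finite W" "finite G" "finite V" "pairwise disjnt (W \<union> G \<union> V)"
    using assms(1,2) WGV by (auto intro: finite_subset)
  moreover have "W \<inter> G = {}" "W \<inter> V = {}" "G \<inter> V = {}"
    unfolding W_def G_def V_def by auto
  moreover have "\<forall>\<omega>\<in>W. adm_arc g \<alpha> \<omega> \<and> \<omega> \<subseteq> curve g - Phi g \<alpha>"
    using adm unfolding W_def by blast
  moreover have "\<forall>\<gamma>\<in>G. adm_arc g \<alpha> \<gamma> \<and> \<gamma> \<subseteq> Phi g \<alpha> - Lam g \<alpha>"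
  proof
    fix \<gamma> assume "\<gamma> \<in> G"
    then have "\<gamma> \<in> \<A>" "\<gamma> \<inter> Ybd g \<alpha> = {}" "\<not> \<gamma> \<subseteq> curve g - Phi g \<alpha>"
      unfolding G_def by auto
    then show "adm_arc g \<alpha> \<gamma> \<and> \<gamma> \<subseteq> Phi g \<alpha> - Lam g \<alpha>"
      using connected_disjoint_Ybd_cases[of \<gamma>] in_curve adm by blast
  qed
  moreover have "\<forall>v\<in>V. adm_arc g \<alpha> v \<and> v \<subseteq> curve g \<and> closure v \<inter> Ylim g \<alpha> \<noteq> {} \<and>
      (\<forall>t\<in>closure v. f t > 0)"
    using adm in_curve meets unfolding V_def by blast
  moreover have "curve g = (\<Union>\<omega>\<in>W. closure \<omega>) \<union> (\<Union>\<gamma>\<in>G. closure \<gamma>) \<union> (\<Union>v\<in>V. closure v)"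
    unfolding cover WGV[symmetric] by blast
  ultimately show ?thesis
    unfolding arc_decomposition_def by blast
qed

lemma arc_decomposition_exists:
  assumes "Ybd g \<alpha> \<noteq> {}" "continuous_on (curve g) f" "\<forall>\<tau>\<in>Ylim g \<alpha>. 0 < f \<tau>"
  shows "\<exists>W G V. arc_decomposition g \<alpha> f W G V"
proof -
  obtain y where y: "y \<in> Ybd g \<alpha>"
    using assms(1) by blast
  define q where "q = param g y"
  have "g q = y" "g (q + 1) = y"
    using y g_param unfolding q_def Ybd_def Lam_def by (auto simp: periodic.plus_period)
  define S where "S = {q..q+1} \<inter> g -` Ybd g \<alpha>"
  have "closed S"
    unfolding S_def by (intro continuous_closed_preimage continuous_on_g closed_atLeastAtMost closed_Ybd)
  have "S \<subseteq> {q..q+1}" "q \<in> S" "q + 1 \<in> S"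
    using y \<open>g q = y\<close> \<open>g (q + 1) = y\<close> unfolding S_def by auto
  have "continuous_on {q..q+1} (f \<circ> g)"
    using assms(2) curve_eq_image[of q] continuous_on_g by (metis continuous_on_compose)
  have Ylim: "g s \<in> Ylim g \<alpha>" if "s islimpt S" for s
    using islimpt_image_g islimpt_subset[OF that] unfolding S_def Ylim_def by blast
  have "0 < (f \<circ> g) s" if "s \<in> {q..q+1}" "s islimpt S" for s
    using assms(3) Ylim[OF that(2)] by simp
  then obtain N p where chain: "step_chain S (f \<circ> g) N p" "p 0 = q" "p N = q + 1"
    using step_chain_exists[OF \<open>closed S\<close> \<open>S \<subseteq> {q..q+1}\<close> \<open>q \<in> S\<close> \<open>q + 1 \<in> S\<close>
        \<open>continuous_on {q..q+1} (f \<circ> g)\<close>] by blast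
  have p_S: "p i \<in> S" "p (Suc i) \<in> S" and p_less: "p i < p (Suc i)" if "i < N" for i
    using chain(1) that unfolding step_chain_def chain_step_def by auto
  have p_bounds: "q \<le> p i" "p (Suc i) \<le> q + 1" if "i < N" for i
    using p_S[OF that] \<open>S \<subseteq> {q..q+1}\<close> by auto
  define arc where "arc i = g ` {p i<..<p (Suc i)}" for i
  have arc_eq: "arc i = open_arc g (g (p i)) (g (p (Suc i)))" if "i < N" for i
    unfolding arc_def using p_less[OF that] p_bounds[OF that] by (subst open_arc_g) auto
  have closure_arc: "closure (arc i) = g ` {p i..p (Suc i)}" if "i < N" for i
    unfolding arc_def using closure_image_g p_less[OF that] by simp
  show ?thesis
  proof (rule arc_decomposition_of_arcs)
    show "finite (arc ` {..<N})"
      by simp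
    show "pairwise disjnt (arc ` {..<N})"
    proof (rule pairwise_imageI)
      fix i j assume "i \<in> {..<N}" "j \<in> {..<N}" "i \<noteq> j"
      then have "{p i<..<p (Suc i)} \<inter> {p j<..<p (Suc j)} = {}"
        using step_chain_disjoint[OF chain \<open>S \<subseteq> {q..q+1}\<close>] by simp
      moreover have "{p k<..<p (Suc k)} \<subseteq> {q..<q+1}" if "k < N" for k
        using p_bounds[OF that] by auto
      ultimately show "disjnt (arc i) (arc j)"
        using \<open>i \<in> {..<N}\<close> \<open>j \<in> {..<N}\<close> inj_on_image_Int[OF inj_on_g_atLeastLessThan, of _ q]
        unfolding disjnt_def arc_def by (metis image_empty lessThan_iff)
    qed
    show "curve g = (\<Union>A\<in>arc ` {..<N}. closure A)"
      using step_chain_Icc_eq_UN[OF chain \<open>S \<subseteq> {q..q+1}\<close>] curve_eq_image[of q] closure_arc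
      by (simp add: image_UN)
  next
    fix A assume "A \<in> arc ` {..<N}"
    then obtain i where "i < N" and A: "A = arc i"
      by blast
    have ends: "g (p i) \<in> Ybd g \<alpha>" "g (p (Suc i)) \<in> Ybd g \<alpha>"
      using p_S[OF \<open>i < N\<close>] unfolding S_def by auto
    then have "(\<alpha> ^^ mult_m g \<alpha>) ` A = A"
      unfolding A arc_eq[OF \<open>i < N\<close>] Ybd_def by (intro funpow_mult_m_image_open_arc) auto
    moreover have "connected A"
      unfolding A arc_def by (intro connected_continuous_image continuous_on_g) auto
    ultimately show "adm_arc g \<alpha> A \<and> connected A"
      unfolding adm_arc_def A using ends arc_eq[OF \<open>i < N\<close>] by blast
    assume "A \<inter> Ybd g \<alpha> \<noteq> {}"
    then obtain s where "s \<in> {p i<..<p (Suc i)}" "g s \<in> Ybd g \<alpha>"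
      unfolding A arc_def by blast
    then have "s \<in> S \<inter> {p i<..<p (Suc i)}"
      using p_bounds[OF \<open>i < N\<close>] unfolding S_def by simp
    then have "S \<inter> {p i<..<p (Suc i)} \<noteq> {}"
      by blast
    then have "(\<forall>s\<in>{p i..p (Suc i)}. 0 < f (g s)) \<and> (\<exists>s\<in>{p i..p (Suc i)}. s islimpt S)"
      using chain(1) \<open>i < N\<close> unfolding step_chain_def chain_step_def by auto
    then show "closure A \<inter> Ylim g \<alpha> \<noteq> {} \<and> (\<forall>t\<in>closure A. 0 < f t)"
      unfolding A closure_arc[OF \<open>i < N\<close>] using Ylim by blast
  qed
qed

end

theorem lemma2p5:
  fixes g :: "real \<Rightarrow> complex" and \<alpha> :: "complex \<Rightarrow> complex"
  assumes "smooth_jordan_param g"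
    and "\<exists>\<beta>. homeomorphism (curve g) (curve g) \<alpha> \<beta>"
    and "\<exists>\<tau>. is_periodic_point (curve g) \<alpha> \<tau>"
  shows
   "(finite (Ybd g \<alpha>) \<longrightarrow>
      Phi g \<alpha> = {} \<or>
      (\<exists>W G. finite W \<and> finite G \<and> W \<inter> G = {} \<and> pairwise disjnt (W \<union> G) \<and>
         (\<forall>\<omega>\<in>W. adm_arc g \<alpha> \<omega> \<and> \<omega> \<subseteq> curve g - Phi g \<alpha>) \<and>
         (\<forall>\<gamma>\<in>G. adm_arc g \<alpha> \<gamma> \<and> \<gamma> \<subseteq> Phi g \<alpha> - Lam g \<alpha>) \<and>
         curve g = (\<Union>\<omega>\<in>W. closure \<omega>) \<union> (\<Union>\<gamma>\<in>G. closure \<gamma>)))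
    \<and>
    (\<forall>f :: complex \<Rightarrow> real. continuous_on (curve g) f \<longrightarrow> infinite (Ybd g \<alpha>) \<longrightarrow>
      (\<forall>\<tau>\<in>Ylim g \<alpha>. f \<tau> > 0) \<longrightarrow>
      (\<exists>W G V. finite W \<and> finite G \<and> finite V \<and>
         W \<inter> G = {} \<and> W \<inter> V = {} \<and> G \<inter> V = {} \<and> pairwise disjnt (W \<union> G \<union> V) \<and>
         (\<forall>\<omega>\<in>W. adm_arc g \<alpha> \<omega> \<and> \<omega> \<subseteq> curve g - Phi g \<alpha>) \<and>
         (\<forall>\<gamma>\<in>G. adm_arc g \<alpha> \<gamma> \<and> \<gamma> \<subseteq> Phi g \<alpha> - Lam g \<alpha>) \<and>
         (\<forall>v\<in>V. adm_arc g \<alpha> v \<and> v \<subseteq> curve g \<and> closure v \<inter> Ylim g \<alpha> \<noteq> {} \<and>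
                 (\<forall>t\<in>closure v. f t > 0)) \<and>
         curve g = (\<Union>\<omega>\<in>W. closure \<omega>) \<union> (\<Union>\<gamma>\<in>G. closure \<gamma>) \<union> (\<Union>v\<in>V. closure v)))"
proof -
  obtain \<beta> where "homeomorphism (curve g) (curve g) \<alpha> \<beta>"
    using assms(2) by blast
  then interpret curve_bijection g \<alpha>
    using assms(1) by unfold_locales (auto simp: homeomorphism_def bij_betw_def intro: inj_on_inverseI)
  have "Lam g \<alpha> \<noteq> {}"
    using Lam_nonempty assms(3) by blast
  have part_a: "Phi g \<alpha> = {} \<or> (\<exists>W G. arc_decomposition g \<alpha> (\<lambda>_. 1) W G {})"
    if "finite (Ybd g \<alpha>)"
  proof (cases "Phi g \<alpha> = {}")
    case False
    then have "\<exists>W G V. arc_decomposition g \<alpha> (\<lambda>_. 1) W G V"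
      using arc_decomposition_exists[OF Ybd_nonempty[OF \<open>Lam g \<alpha> \<noteq> {}\<close>]] by simp
    then obtain W G V where dec: "arc_decomposition g \<alpha> (\<lambda>_. 1) W G V"
      by blast
    have "Ylim g \<alpha> = {}"
      using that islimpt_finite unfolding Ylim_def by blast
    then have "V = {}"
      using dec by (simp add: arc_decomposition_def)
    then show ?thesis
      using dec by blast
  qed simp
  have part_b: "\<exists>W G V. arc_decomposition g \<alpha> f W G V"
    if "continuous_on (curve g) f" "infinite (Ybd g \<alpha>)" "\<forall>\<tau>\<in>Ylim g \<alpha>. 0 < f \<tau>" for f
    using arc_decomposition_exists that by force
  show ?thesis
    using part_a part_b unfolding arc_decomposition_def by simp
qed

end
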